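(* Let $X$, $Y$ be Hilbert spaces, and let $E_0\in L(X)$ be self-adjoint, nonnegative and with closed range. Let $A_0:X\supset{\rm dom}\,A_0\to X$ be linear and let $\Gamma\in L({\rm dom}\,A_0,Y)$ be surjective, where ${\rm dom}\,A_0$ is equipped with the graph norm $\|x\|_{{\rm dom}\,A_0}=(\|x\|_X^2+\|A_0x\|_X^2)^{1/2}$. Assume that there exists $\omega\in\mathbb{R}$ such that ${\rm Re}\,((A_0-\omega E_0)x,x)_X\le0$ for all $x\in\ker\Gamma$, and some $\lambda_0>\omega$ such that $\lambda_0E_0-A_0|_{\ker\Gamma}:\ker\Gamma\to X$ is surjective. Moreover assume $\ker E_0\cap\ker A_0\cap\ker\Gamma=\{0\}$. Let $Z=X\times Y$ and define $E\in L(X,Z)$ and $A:X\supset{\rm dom}\,A_0\to Z$ by $Ex=(E_0x,0)$, $Ax=(A_0x,\Gamma x)$. Then $(\omega,\infty)\subseteq\rho(E,A)$ and the left resolvent $R_l(\lambda)=E(A-\lambda E)^{-1}$ fulfills condition $\mathbf{(D_2)}$. If moreover $\ker E_0=\{0\}$, then the right resolvent $R_r(\lambda)=(A-\lambda E)^{-1}E$ fulfills condition $\mathbf{(D_1)}$.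
   Context: $\rho(E,A)=\{\lambda\in\mathbb{C}:\lambda E-A:{\rm dom}\,A\to Z\text{ bijective}\}$; $R_l$ (with values in $L(Z)$) and $R_r$ (with values in $L(X)$) are pseudo-resolvents on $\Omega=\rho(E,A)$, i.e. $\frac{R(\lambda)-R(\mu)}{\mu-\lambda}=R(\lambda)R(\mu)$ for $\lambda\ne\mu$. Condition $\mathbf{(D_k)}$ for a pseudo-resolvent $R:\Omega\to L(V)$ on a Banach space $V$ ($k\ge1$): there exist $\omega'\in\mathbb{R}$, $M>0$ with $[\omega',\infty)\subseteq\Omega$ and $\|R(\lambda)v\|\le\frac{M}{\lambda-\omega'}\|v\|$ for all $\lambda\in(\omega',\infty)$ and $v\in{\rm ran}\,R(\omega')^{k-1}$ (with ${\rm ran}\,R(\omega')^0=V$). *)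

theory Defs
  imports "HOL-Analysis.Analysis"
begin

text \<open>The complex inner product is recovered from the real one below
(its real part is the real inner product).\<close>

class chilbert = real_inner + complete_space +
  fixes scaleC :: "complex \<Rightarrow> 'a \<Rightarrow> 'a"
  assumes scaleC_add_right: "scaleC a (x + y) = scaleC a x + scaleC a y"
    and scaleC_add_left: "scaleC (a + b) x = scaleC a x + scaleC b x"
    and scaleC_scaleC: "scaleC a (scaleC b x) = scaleC (a * b) x"
    and scaleC_of_real: "scaleC (complex_of_real r) x = scaleR r x"
    and norm_scaleC: "norm (scaleC a x) = cmod a * norm x"

text \<open>Complex inner product, linear in the first and conjugate linear in the second argument.\<close>
definition cinner :: "'a::chilbert \<Rightarrow> 'a \<Rightarrow> complex" where
  "cinner x y = Complex (inner x y) (inner x (scaleC \<i> y))"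

instantiation prod :: (chilbert, chilbert) chilbert
begin
definition scaleC_prod_def: "scaleC a z = (scaleC a (fst z), scaleC a (snd z))"
instance
proof
  fix a b :: complex and x y :: "'a \<times> 'b" and r :: real
  show "scaleC a (x + y) = scaleC a x + scaleC a y"
    by (simp add: scaleC_prod_def scaleC_add_right)
  show "scaleC (a + b) x = scaleC a x + scaleC b x"
    by (simp add: scaleC_prod_def scaleC_add_left)
  show "scaleC a (scaleC b x) = scaleC (a * b) x"
    by (simp add: scaleC_prod_def scaleC_scaleC)
  show "scaleC (complex_of_real r) x = scaleR r x"
    by (simp add: scaleC_prod_def scaleC_of_real scaleR_prod_def)
  have "norm (scaleC a x) = sqrt ((cmod a)\<^sup>2 * ((norm (fst x))\<^sup>2 + (norm (snd x))\<^sup>2))"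
    by (simp add: scaleC_prod_def norm_Pair norm_scaleC power_mult_distrib algebra_simps)
  also have "\<dots> = cmod a * norm x"
    by (simp add: real_sqrt_mult norm_prod_def)
  finally show "norm (scaleC a x) = cmod a * norm x" .
qed
end

definition csubspace :: "'a::chilbert set \<Rightarrow> bool" where
  "csubspace D \<longleftrightarrow> 0 \<in> D \<and> (\<forall>x\<in>D. \<forall>y\<in>D. x + y \<in> D) \<and> (\<forall>a. \<forall>x\<in>D. scaleC a x \<in> D)"

text \<open>Complex-linear map defined on a subspace D (its values outside D are irrelevant).\<close>
definition clinear_on :: "'a::chilbert set \<Rightarrow> ('a \<Rightarrow> 'b::chilbert) \<Rightarrow> bool" where
  "clinear_on D f \<longleftrightarrow> (\<forall>x\<in>D. \<forall>y\<in>D. f (x + y) = f x + f y) \<and> (\<forall>a. \<forall>x\<in>D. f (scaleC a x) = scaleC a (f x))"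

definition bounded_clinear :: "('a::chilbert \<Rightarrow> 'b::chilbert) \<Rightarrow> bool" where
  "bounded_clinear f \<longleftrightarrow> clinear_on UNIV f \<and> (\<exists>K. \<forall>x. norm (f x) \<le> norm x * K)"

definition graph_norm :: "('a::chilbert \<Rightarrow> 'a) \<Rightarrow> 'a \<Rightarrow> real" where
  "graph_norm A0 x = sqrt ((norm x)\<^sup>2 + (norm (A0 x))\<^sup>2)"

definition pencil_rho :: "('x::chilbert \<Rightarrow> 'z::chilbert) \<Rightarrow> ('x \<Rightarrow> 'z) \<Rightarrow> 'x set \<Rightarrow> complex set" where
  "pencil_rho E A D = {l. bij_betw (\<lambda>x. scaleC l (E x) - A x) D UNIV}"

definition pencil_inv :: "('x::chilbert \<Rightarrow> 'z::chilbert) \<Rightarrow> ('x \<Rightarrow> 'z) \<Rightarrow> 'x set \<Rightarrow> complex \<Rightarrow> 'z \<Rightarrow> 'x" where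
  "pencil_inv E A D l z = (THE x. x \<in> D \<and> A x - scaleC l (E x) = z)"

definition left_resolvent :: "('x::chilbert \<Rightarrow> 'z::chilbert) \<Rightarrow> ('x \<Rightarrow> 'z) \<Rightarrow> 'x set \<Rightarrow> complex \<Rightarrow> 'z \<Rightarrow> 'z" where
  "left_resolvent E A D l z = E (pencil_inv E A D l z)"

definition right_resolvent :: "('x::chilbert \<Rightarrow> 'z::chilbert) \<Rightarrow> ('x \<Rightarrow> 'z) \<Rightarrow> 'x set \<Rightarrow> complex \<Rightarrow> 'x \<Rightarrow> 'x" where
  "right_resolvent E A D l x = pencil_inv E A D l (E x)"

definition cond_D :: "nat \<Rightarrow> complex set \<Rightarrow> (complex \<Rightarrow> 'v::real_normed_vector \<Rightarrow> 'v) \<Rightarrow> bool" where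
  "cond_D k \<Omega> R \<longleftrightarrow> (\<exists>\<omega>' M. M > 0 \<and> (\<forall>t. t \<ge> \<omega>' \<longrightarrow> complex_of_real t \<in> \<Omega>) \<and>
     (\<forall>t. t > \<omega>' \<longrightarrow> (\<forall>v \<in> range (R (complex_of_real \<omega>') ^^ (k - 1)).
        norm (R (complex_of_real t) v) \<le> M / (t - \<omega>') * norm v)))"

end

theory Submission
  imports Defs
begin

text \<open>On \<open>V = ker \<Gamma>\<close> dissipativity gives \<open>(t - \<omega>) (E0 x, x) \<le> - Re ((A0 - t E0) x, x)\<close>.
Together with \<open>\<parallel>E0 x\<parallel>\<^sup>2 \<le> \<parallel>E0\<parallel> (E0 x, x)\<close> and, because \<open>E0\<close> has closed range (open mapping
theorem), \<open>(E0 u, x) \<le> C \<parallel>E0 u\<parallel> \<parallel>E0 x\<parallel>\<close>, this yields the resolvent estimate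
\<open>(t - \<omega>) \<parallel>E0 x\<parallel> \<le> M \<parallel>E0 u\<parallel>\<close> whenever \<open>(A0 - t E0) x = E0 u\<close> with \<open>x \<in> V\<close>. It gives
injectivity of \<open>t E0 - A0\<close> on \<open>V\<close> for \<open>t > \<omega>\<close>, condition \<open>(D\<^sub>2)\<close> for \<open>R\<^sub>l\<close> and, for
injective \<open>E0\<close>, condition \<open>(D\<^sub>1)\<close> for \<open>R\<^sub>r\<close>. Surjectivity spreads from \<open>\<lambda>\<^sub>0\<close> to all of
\<open>(\<omega>, \<infinity>)\<close>: if \<open>a E0 - A0\<close> maps \<open>V\<close> onto \<open>X\<close>, a contraction on \<open>range E0\<close> shows the same
for \<open>|t - a| \<le> (a - \<omega>) / (2 M)\<close>, and such relative steps reach every \<open>t > \<omega>\<close>. Surjectivity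
of \<open>\<Gamma>\<close> then lifts bijectivity from \<open>V\<close> to the pencil \<open>(E, A)\<close>. Only real parts of complex
inner products occur, so everything happens in the underlying real Hilbert space.\<close>

section \<open>Nonnegative self-adjoint operators\<close>

lemma nonneg_quadratic_discriminant:
  fixes a b c :: real
  assumes nonneg: "\<And>t. 0 \<le> a + 2 * t * b + t\<^sup>2 * c" and "0 \<le> c"
  shows "b\<^sup>2 \<le> a * c"
proof (cases "c = 0")
  case True
  show ?thesis
  proof (cases "b = 0")
    case False
    have "0 \<le> a + 2 * (-(a + 1) / (2 * b)) * b + (-(a + 1) / (2 * b))\<^sup>2 * c" by (rule nonneg)
    with False True show ?thesis by (simp add: field_simps)
  qed (use True nonneg in simp)
next
  case False
  with \<open>0 \<le> c\<close> have c: "c > 0" by simp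
  have "0 \<le> a + 2 * (-b / c) * b + (-b / c)\<^sup>2 * c" by (rule nonneg)
  with c show ?thesis by (simp add: field_simps power2_eq_square)
qed

lemma selfadjoint_nonneg_cauchy_schwarz:
  fixes E :: "'a::real_inner \<Rightarrow> 'a"
  assumes "linear E" and selfadj: "\<And>x y. inner (E x) y = inner x (E y)"
    and nonneg: "\<And>x. 0 \<le> inner (E x) x"
  shows "(inner (E x) y)\<^sup>2 \<le> inner (E x) x * inner (E y) y"
proof (rule nonneg_quadratic_discriminant)
  interpret E: linear E by fact
  fix t :: real
  have "inner (E y) x = inner (E x) y" by (metis selfadj inner_commute)
  then have "inner (E (x + t *\<^sub>R y)) (x + t *\<^sub>R y)
      = inner (E x) x + 2 * t * inner (E x) y + t\<^sup>2 * inner (E y) y"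
    by (simp add: E.add E.scale inner_add_left inner_add_right power2_eq_square algebra_simps)
  with nonneg show "0 \<le> inner (E x) x + 2 * t * inner (E x) y + t\<^sup>2 * inner (E y) y"
    by metis
qed (rule nonneg)

lemma selfadjoint_nonneg_norm_sq_le:
  fixes E :: "'a::real_inner \<Rightarrow> 'a"
  assumes "bounded_linear E" and selfadj: "\<And>x y. inner (E x) y = inner x (E y)"
    and nonneg: "\<And>x. 0 \<le> inner (E x) x"
  shows "\<exists>K\<ge>0. \<forall>x. (norm (E x))\<^sup>2 \<le> K * inner (E x) x"
proof -
  interpret E: bounded_linear E by fact
  obtain B where B: "B > 0" "\<And>x. norm (E x) \<le> norm x * B" using E.pos_bounded by blast
  have "(norm (E x))\<^sup>2 \<le> B * inner (E x) x" for x
  proof -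
    have "((norm (E x))\<^sup>2)\<^sup>2 = (inner (E x) (E x))\<^sup>2" by (simp add: power2_norm_eq_inner)
    also have "\<dots> \<le> inner (E x) x * inner (E (E x)) (E x)"
      by (rule selfadjoint_nonneg_cauchy_schwarz[OF E.linear_axioms selfadj nonneg])
    also have "\<dots> \<le> inner (E x) x * (B * (norm (E x))\<^sup>2)"
    proof (rule mult_left_mono)
      have "inner (E (E x)) (E x) \<le> norm (E (E x)) * norm (E x)" by (rule norm_cauchy_schwarz)
      also have "\<dots> \<le> norm (E x) * B * norm (E x)" using B(2) by (simp add: mult_right_mono)
      finally show "inner (E (E x)) (E x) \<le> B * (norm (E x))\<^sup>2" by (simp add: power2_eq_square mult_ac)
    qed (rule nonneg)
    finally have *: "(norm (E x))\<^sup>2 * (norm (E x))\<^sup>2 \<le> (B * inner (E x) x) * (norm (E x))\<^sup>2"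
      by (simp add: power2_eq_square algebra_simps)
    show ?thesis
    proof (cases "E x = 0")
      case False
      then show ?thesis using mult_right_le_imp_le[OF *] by simp
    qed (use nonneg B in auto)
  qed
  with B show ?thesis by (intro exI[of _ B]) auto
qed

section \<open>Operators with closed range\<close>

lemma closed_countable_cover_interior:
  fixes S :: "'a::complete_space set" and K :: "nat \<Rightarrow> 'a set"
  assumes "closed S" "S \<noteq> {}" "\<And>n. closedin (top_of_set S) (K n)" "S \<subseteq> (\<Union>n. K n)"
  shows "\<exists>n. (top_of_set S) interior_of (K n) \<noteq> {}"
proof (rule ccontr)
  assume no_interior: "\<nexists>n. (top_of_set S) interior_of (K n) \<noteq> {}"
  have "(top_of_set S) interior_of \<Union>(range K) = {}"
  proof (rule Baire_category_alt)
    show "completely_metrizable_space (top_of_set S) \<or>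
        locally_compact_space (top_of_set S) \<and> regular_space (top_of_set S)"
      using completely_metrizable_space_closedin[OF completely_metrizable_space_euclidean]
        \<open>closed S\<close> closed_closedin by blast
    show "countable (range K)" by simp
    fix T assume "T \<in> range K"
    then show "closedin (top_of_set S) T \<and> (top_of_set S) interior_of T = {}"
      using assms(3) no_interior by auto
  qed
  moreover have "\<Union>(range K) = S" using assms(3,4) closedin_subset by fastforce
  moreover have "(top_of_set S) interior_of S = S"
    by (metis interior_of_topspace topspace_euclidean_subtopology)
  ultimately show False using \<open>S \<noteq> {}\<close> by simp
qed

lemma closure_image_cball_contains_ball:
  fixes E :: "'a::real_normed_vector \<Rightarrow> 'b::banach"
  assumes "bounded_linear E" and closed_range: "closed (range E)"
  obtains n w0 r where "w0 \<in> range E" "0 < r" "ball w0 r \<inter> range E \<subseteq> closure (E ` cball 0 (real n))"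
proof -
  define K where "K n = closure (E ` cball 0 (real n))" for n :: nat
  have K_sub: "K n \<subseteq> range E" for n
    using closed_range by (simp add: K_def closure_minimal image_mono)
  have "range E \<subseteq> (\<Union>n. K n)"
  proof
    fix w assume "w \<in> range E"
    then obtain x where x: "w = E x" by auto
    obtain n :: nat where "norm x \<le> real n" using real_arch_simple by blast
    then have "w \<in> K n" unfolding K_def x by (intro subsetD[OF closure_subset]) auto
    then show "w \<in> (\<Union>n. K n)" by auto
  qed
  with closed_range K_sub
  obtain n where "(top_of_set (range E)) interior_of (K n) \<noteq> {}"
    using closed_countable_cover_interior[of "range E" K] by (auto simp: K_def closed_subset)
  then obtain w0 where w0: "w0 \<in> (top_of_set (range E)) interior_of (K n)" by blast
  have "openin (top_of_set (range E)) ((top_of_set (range E)) interior_of (K n))" by simp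
  then obtain r where r: "r > 0" "ball w0 r \<inter> range E \<subseteq> (top_of_set (range E)) interior_of (K n)"
    using w0 unfolding openin_contains_ball by blast
  have "(top_of_set (range E)) interior_of (K n) \<subseteq> K n" by (rule interior_of_subset)
  with r w0 K_sub have "w0 \<in> range E" "ball w0 r \<inter> range E \<subseteq> K n" by blast+
  with r show ?thesis using that unfolding K_def by blast
qed

lemma closed_range_approximate_preimage_near_zero:
  fixes E :: "'a::real_normed_vector \<Rightarrow> 'b::banach"
  assumes "bounded_linear E" and "closed (range E)"
  obtains c r where "0 \<le> c" "0 < r"
    "\<And>w e. w \<in> range E \<Longrightarrow> norm w < r \<Longrightarrow> e > 0 \<Longrightarrow> \<exists>x. norm x \<le> c \<and> norm (E x - w) < e"
proof -
  interpret E: bounded_linear E by fact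
  obtain n w0 r where w0: "w0 \<in> range E" and r: "0 < r"
    and ball: "ball w0 r \<inter> range E \<subseteq> closure (E ` cball 0 (real n))"
    using closure_image_cball_contains_ball[OF assms] .
  have approx: "\<exists>x. norm x \<le> real n \<and> norm (E x - v) < e"
    if "v \<in> ball w0 r \<inter> range E" "e > 0" for v e
  proof -
    have "v \<in> closure (E ` cball 0 (real n))" using that(1) ball by blast
    then obtain u where "u \<in> E ` cball 0 (real n)" "dist u v < e"
      using \<open>e > 0\<close> unfolding closure_approachable by blast
    then show ?thesis by (auto simp: dist_norm)
  qed
  have "\<exists>x. norm x \<le> 2 * real n \<and> norm (E x - w) < e"
    if w: "w \<in> range E" and w_small: "norm w < r" and "e > 0" for w e
  proof -
    \<comment> \<open>approximate both \<open>w0 + w\<close> and \<open>w0\<close>, then subtract\<close>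
    obtain a b where "w0 = E a" "w = E b" using w w0 by blast
    then have "w0 + w \<in> range E" by (simp add: E.add[symmetric])
    moreover have "w0 + w \<in> ball w0 r" using w_small by (simp add: dist_norm)
    ultimately have "w0 + w \<in> ball w0 r \<inter> range E" by blast
    then obtain x1 where x1: "norm x1 \<le> real n" "norm (E x1 - (w0 + w)) < e / 2"
      using approx[of "w0 + w" "e / 2"] \<open>e > 0\<close> by auto
    obtain x2 where x2: "norm x2 \<le> real n" "norm (E x2 - w0) < e / 2"
      using approx[of w0 "e / 2"] w0 r \<open>e > 0\<close> by auto
    have "E (x1 - x2) - w = (E x1 - (w0 + w)) - (E x2 - w0)" by (simp add: E.diff)
    then have "norm (E (x1 - x2) - w) \<le> norm (E x1 - (w0 + w)) + norm (E x2 - w0)"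
      by (metis norm_triangle_ineq4)
    moreover have "norm (x1 - x2) \<le> norm x1 + norm x2" by (rule norm_triangle_ineq4)
    ultimately show ?thesis using x1 x2 by (intro exI[of _ "x1 - x2"]) auto
  qed
  with r show ?thesis using that[of "2 * real n" r] by simp
qed

lemma closed_range_approximate_preimage:
  fixes E :: "'a::real_normed_vector \<Rightarrow> 'b::banach"
  assumes "bounded_linear E" and "closed (range E)"
  shows "\<exists>C\<ge>0. \<forall>w\<in>range E. \<forall>e>0. \<exists>x. norm x \<le> C * norm w \<and> norm (E x - w) < e"
proof -
  interpret E: bounded_linear E by fact
  obtain c r where c: "0 \<le> c" and r: "0 < r"
    and small: "\<And>w e. w \<in> range E \<Longrightarrow> norm w < r \<Longrightarrow> e > 0 \<Longrightarrow> \<exists>x. norm x \<le> c \<and> norm (E x - w) < e"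
    by (rule closed_range_approximate_preimage_near_zero[OF assms]) auto
  have scaled: "\<exists>x. norm x \<le> 2 * c / r * norm w \<and> norm (E x - w) < e"
    if w: "w \<in> range E" and e: "e > 0" and "w \<noteq> 0" for w e
  proof -
    define s where "s = r / (2 * norm w)"
    have s: "s > 0" using \<open>w \<noteq> 0\<close> r by (simp add: s_def)
    have "s *\<^sub>R w \<in> range E" using w by (metis E.scaleR rangeE rangeI)
    moreover have "norm (s *\<^sub>R w) < r" using \<open>w \<noteq> 0\<close> r s by (simp add: s_def)
    moreover have "e * s > 0" using e s by simp
    ultimately obtain x where x: "norm x \<le> c" "norm (E x - s *\<^sub>R w) < e * s"
      using small by blast
    have "E (x /\<^sub>R s) - w = (E x - s *\<^sub>R w) /\<^sub>R s"
      using s by (simp add: E.scaleR scaleR_diff_right)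
    then have "norm (E (x /\<^sub>R s) - w) = norm (E x - s *\<^sub>R w) / s"
      using s by (simp add: divide_inverse mult.commute)
    also have "\<dots> < e" using x s by (simp add: divide_less_eq)
    finally have "norm (E (x /\<^sub>R s) - w) < e" .
    moreover have "norm (x /\<^sub>R s) = norm x / s" using s by (simp add: divide_inverse mult.commute)
    moreover have "norm x / s \<le> 2 * c / r * norm w"
      using x s \<open>w \<noteq> 0\<close> r by (simp add: s_def field_simps)
    ultimately show ?thesis by (intro exI[of _ "x /\<^sub>R s"]) simp
  qed
  show ?thesis
  proof (intro exI[of _ "2 * c / r"] conjI ballI allI impI)
    show "0 \<le> 2 * c / r" using c r by simp
    fix w e assume "w \<in> range E" "(e::real) > 0"
    then show "\<exists>x. norm x \<le> 2 * c / r * norm w \<and> norm (E x - w) < e"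
      using scaled by (cases "w = 0") (auto intro: exI[of _ 0] simp: E.zero)
  qed
qed

lemma sum_of_telescoping_preimages:
  fixes E :: "'a::banach \<Rightarrow> 'b::real_normed_vector"
  assumes "bounded_linear E" and telescope: "\<And>n. E (x n) = s n - s (Suc n)" and "s \<longlonglongrightarrow> 0"
    and x_le: "\<And>n. norm (x n) \<le> B * (1/2) ^ n"
  shows "E (suminf x) = s 0" and "norm (suminf x) \<le> 2 * B"
proof -
  interpret E: bounded_linear E by fact
  have geometric: "summable (\<lambda>n. B * (1/2::real) ^ n)"
    by (intro summable_mult summable_geometric) simp
  have "summable x"
    by (rule summable_norm_cancel, rule summable_comparison_test[OF _ geometric]) (use x_le in auto)
  have "(\<lambda>n. s n - s (Suc n)) sums (s 0 - 0)" using \<open>s \<longlonglongrightarrow> 0\<close> by (rule telescope_sums')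
  then have "(\<lambda>n. E (x n)) sums s 0" by (simp add: telescope)
  then show "E (suminf x) = s 0" using E.suminf[OF \<open>summable x\<close>] by (simp add: sums_iff)
  have "norm (suminf x) \<le> (\<Sum>n. B * (1/2::real) ^ n)" by (rule norm_suminf_le[OF x_le geometric])
  also have "\<dots> = 2 * B" by (simp add: suminf_mult suminf_geometric)
  finally show "norm (suminf x) \<le> 2 * B" .
qed

lemma halving_preimage_imp_exact_preimage:
  fixes E :: "'a::banach \<Rightarrow> 'b::real_normed_vector"
  assumes "bounded_linear E" and "C \<ge> 0"
    and halving: "\<forall>w\<in>range E. \<exists>y. norm y \<le> C * norm w \<and> norm (E y - w) \<le> norm w / 2"
  shows "\<forall>w\<in>range E. \<exists>x. E x = w \<and> norm x \<le> 2 * C * norm w"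
proof
  interpret E: bounded_linear E by fact
  obtain g where g: "\<And>r. r \<in> range E \<Longrightarrow> norm (g r) \<le> C * norm r \<and> norm (E (g r) - r) \<le> norm r / 2"
    using halving by metis
  fix w assume w: "w \<in> range E"
  \<comment> \<open>the residuals \<open>s n\<close> halve at each step; the corrections \<open>g (s n)\<close>
     sum to a preimage\<close>
  define s where "s n = ((\<lambda>r. r - E (g r)) ^^ n) w" for n
  have s_Suc: "s (Suc n) = s n - E (g (s n))" for n by (simp add: s_def)
  have s_range: "s n \<in> range E" for n
  proof (induction n)
    case (Suc n)
    then obtain x where "s n = E x" by auto
    then have "s (Suc n) = E (x - g (s n))" by (simp add: s_Suc E.diff)
    then show ?case by auto
  qed (use w in \<open>simp add: s_def\<close>)
  have s_le: "norm (s n) \<le> norm w * (1/2) ^ n" for n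
  proof (induction n)
    case (Suc n)
    have "norm (s (Suc n)) \<le> norm (s n) / 2"
      using g[OF s_range] by (simp add: s_Suc norm_minus_commute)
    with Suc show ?case by simp
  qed (simp add: s_def)
  have "s \<longlonglongrightarrow> 0"
  proof (rule tendsto_norm_zero_cancel, rule Lim_null_comparison)
    show "\<forall>\<^sub>F n in sequentially. norm (norm (s n)) \<le> norm w * (1/2) ^ n" using s_le by simp
    show "(\<lambda>n. norm w * (1/2::real) ^ n) \<longlonglongrightarrow> 0"
      by (intro tendsto_mult_right_zero LIMSEQ_power_zero) simp
  qed
  moreover have "norm (g (s n)) \<le> C * norm w * (1/2) ^ n" for n
    using g[OF s_range, of n] mult_left_mono[OF s_le \<open>C \<ge> 0\<close>, of n] by (simp add: mult.assoc)
  ultimately have "E (suminf (g \<circ> s)) = s 0" "norm (suminf (g \<circ> s)) \<le> 2 * (C * norm w)"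
    using sum_of_telescoping_preimages[OF assms(1), of "g \<circ> s" s "C * norm w"] by (simp_all add: s_Suc)
  then show "\<exists>x. E x = w \<and> norm x \<le> 2 * C * norm w" by (auto simp: s_def mult.assoc)
qed

lemma closed_range_bounded_preimage:
  fixes E :: "'a::banach \<Rightarrow> 'b::banach"
  assumes "bounded_linear E" and "closed (range E)"
  shows "\<exists>C\<ge>0. \<forall>w\<in>range E. \<exists>x. E x = w \<and> norm x \<le> C * norm w"
proof -
  interpret E: bounded_linear E by fact
  obtain C where C: "C \<ge> 0" "\<forall>w\<in>range E. \<forall>e>0. \<exists>x. norm x \<le> C * norm w \<and> norm (E x - w) < e"
    using closed_range_approximate_preimage[OF assms] by blast
  have "\<forall>w\<in>range E. \<exists>y. norm y \<le> C * norm w \<and> norm (E y - w) \<le> norm w / 2"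
  proof
    fix w assume "w \<in> range E"
    show "\<exists>y. norm y \<le> C * norm w \<and> norm (E y - w) \<le> norm w / 2"
    proof (cases "w = 0")
      case False
      then show ?thesis
        using C(2) \<open>w \<in> range E\<close> by (meson half_gt_zero zero_less_norm_iff less_imp_le)
    qed (simp add: E.zero)
  qed
  then have "\<forall>w\<in>range E. \<exists>x. E x = w \<and> norm x \<le> 2 * C * norm w"
    by (rule halving_preimage_imp_exact_preimage[OF assms(1) C(1)])
  with C(1) show ?thesis by (intro exI[of _ "2 * C"]) auto
qed

lemma selfadjoint_closed_range_inner_le:
  fixes E :: "'a::{real_inner, banach} \<Rightarrow> 'a"
  assumes "bounded_linear E" and selfadj: "\<And>x y. inner (E x) y = inner x (E y)"
    and "closed (range E)"
  shows "\<exists>C\<ge>0. \<forall>u x. inner (E u) x \<le> C * norm (E u) * norm (E x)"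
proof -
  obtain C where C: "C \<ge> 0" "\<forall>w\<in>range E. \<exists>a. E a = w \<and> norm a \<le> C * norm w"
    using closed_range_bounded_preimage[OF assms(1,3)] by blast
  have "inner (E u) x \<le> C * norm (E u) * norm (E x)" for u x
  proof -
    obtain a where a: "E a = E u" "norm a \<le> C * norm (E u)" using C(2) by blast
    have "inner (E u) x = inner a (E x)" using selfadj a(1) by metis
    also have "\<dots> \<le> norm a * norm (E x)" by (rule norm_cauchy_schwarz)
    also have "\<dots> \<le> C * norm (E u) * norm (E x)" using a(2) by (simp add: mult_right_mono)
    finally show ?thesis .
  qed
  with C(1) show ?thesis by blast
qed

lemma injective_closed_range_bounded_below:
  fixes E :: "'a::banach \<Rightarrow> 'b::banach"
  assumes "bounded_linear E" and "closed (range E)" and inj: "\<And>x. E x = 0 \<Longrightarrow> x = 0"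
  shows "\<exists>C\<ge>0. \<forall>x. norm x \<le> C * norm (E x)"
proof -
  interpret E: bounded_linear E by fact
  obtain C where C: "C \<ge> 0" "\<forall>w\<in>range E. \<exists>a. E a = w \<and> norm a \<le> C * norm w"
    using closed_range_bounded_preimage[OF assms(1,2)] by blast
  have "norm x \<le> C * norm (E x)" for x
  proof -
    obtain a where a: "E a = E x" "norm a \<le> C * norm (E x)" using C(2) by blast
    then have "a = x" using inj[of "a - x"] by (simp add: E.diff)
    with a(2) show ?thesis by simp
  qed
  with C(1) show ?thesis by blast
qed

section \<open>Dissipative pencils\<close>

lemma relative_step_interval:
  fixes P :: "real \<Rightarrow> bool"
  assumes "0 < c" and "P c" and \<delta>: "0 < \<delta>" "\<delta> < 1"
    and step: "\<And>a s. 0 < a \<Longrightarrow> P a \<Longrightarrow> \<bar>s - a\<bar> \<le> \<delta> * a \<Longrightarrow> P s"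
  shows "c * (1 - \<delta>) ^ n \<le> s \<Longrightarrow> s \<le> c * (1 + \<delta>) ^ n \<Longrightarrow> P s"
proof (induction n arbitrary: s)
  case 0
  then show ?case using \<open>P c\<close> by simp
next
  case (Suc n)
  define lo hi where "lo = c * (1 - \<delta>) ^ n" and "hi = c * (1 + \<delta>) ^ n"
  have "0 < lo" using \<open>0 < c\<close> \<delta> by (simp add: lo_def)
  moreover have "lo \<le> hi"
    unfolding lo_def hi_def using \<open>0 < c\<close> \<delta> by (intro mult_left_mono power_mono) auto
  ultimately have "P lo" "P hi" by (auto intro: Suc.IH simp: lo_def hi_def)
  consider "s < lo" | "lo \<le> s \<and> s \<le> hi" | "hi < s" by linarith
  then show ?case
  proof cases
    case 1
    have "lo - s \<le> \<delta> * lo" using Suc.prems(1) by (simp add: lo_def algebra_simps)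
    with 1 have "\<bar>s - lo\<bar> \<le> \<delta> * lo" by (simp add: abs_if)
    with \<open>0 < lo\<close> \<open>P lo\<close> show ?thesis by (rule step)
  next
    case 2
    then show ?thesis using Suc.IH by (simp add: lo_def hi_def)
  next
    case 3
    have "s - hi \<le> \<delta> * hi" using Suc.prems(2) by (simp add: hi_def algebra_simps)
    with 3 have "\<bar>s - hi\<bar> \<le> \<delta> * hi" by (simp add: abs_if)
    moreover have "0 < hi" using \<open>0 < lo\<close> \<open>lo \<le> hi\<close> by linarith
    ultimately show ?thesis using \<open>P hi\<close> step by blast
  qed
qed

lemma pos_real_relative_step_induct:
  fixes P :: "real \<Rightarrow> bool"
  assumes "0 < t" and "0 < c" and "P c" and \<delta>: "0 < \<delta>" "\<delta> < 1"
    and step: "\<And>a s. 0 < a \<Longrightarrow> P a \<Longrightarrow> \<bar>s - a\<bar> \<le> \<delta> * a \<Longrightarrow> P s"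
  shows "P t"
proof -
  obtain n1 where n1: "t / c < (1 + \<delta>) ^ n1"
    using real_arch_pow[of "1 + \<delta>" "t / c"] \<delta> by auto
  obtain n2 where n2: "(1 - \<delta>) ^ n2 < t / c"
    using real_arch_pow_inv[of "t / c" "1 - \<delta>"] \<open>0 < t\<close> \<open>0 < c\<close> \<delta> by auto
  have "(1 - \<delta>) ^ (n1 + n2) \<le> (1 - \<delta>) ^ n2"
    using \<delta> by (intro power_decreasing) auto
  then have "c * (1 - \<delta>) ^ (n1 + n2) \<le> c * (1 - \<delta>) ^ n2"
    using \<open>0 < c\<close> by simp
  moreover have "c * (1 - \<delta>) ^ n2 < t"
    using n2 \<open>0 < c\<close> by (simp add: pos_less_divide_eq mult.commute)
  ultimately have lower: "c * (1 - \<delta>) ^ (n1 + n2) \<le> t" by linarith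
  have "(1 + \<delta>) ^ n1 \<le> (1 + \<delta>) ^ (n1 + n2)"
    using \<delta> by (intro power_increasing) auto
  then have "c * (1 + \<delta>) ^ n1 \<le> c * (1 + \<delta>) ^ (n1 + n2)"
    using \<open>0 < c\<close> by simp
  moreover have "t < c * (1 + \<delta>) ^ n1"
    using n1 \<open>0 < c\<close> by (simp add: pos_divide_less_eq mult.commute)
  ultimately have upper: "t \<le> c * (1 + \<delta>) ^ (n1 + n2)" by linarith
  show ?thesis
    by (rule relative_step_interval[where P = P and c = c and \<delta> = \<delta> and n = "n1 + n2"])
      (fact assms lower upper)+
qed

locale dissipative_pencil =
  fixes E0 A0 :: "'a::{real_inner, banach} \<Rightarrow> 'a" and V :: "'a set" and \<omega> :: real
  assumes E0_bounded_linear: "bounded_linear E0"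
    and E0_selfadjoint: "\<And>x y. inner (E0 x) y = inner x (E0 y)"
    and E0_nonneg: "\<And>x. 0 \<le> inner (E0 x) x"
    and E0_closed_range: "closed (range E0)"
    and V_subspace: "subspace V"
    and A0_diff: "\<And>x y. x \<in> V \<Longrightarrow> y \<in> V \<Longrightarrow> A0 (x - y) = A0 x - A0 y"
    and dissipative: "\<And>x. x \<in> V \<Longrightarrow> inner (A0 x - \<omega> *\<^sub>R E0 x) x \<le> 0"
    and common_kernel_trivial: "\<And>x. x \<in> V \<Longrightarrow> E0 x = 0 \<Longrightarrow> A0 x = 0 \<Longrightarrow> x = 0"
begin

sublocale E0: bounded_linear E0 by (fact E0_bounded_linear)

lemma shifted_dissipative:
  assumes "x \<in> V"
  shows "(t - \<omega>) * inner (E0 x) x \<le> - inner (A0 x - t *\<^sub>R E0 x) x"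
proof -
  have "inner (A0 x - \<omega> *\<^sub>R E0 x) x = inner (A0 x - t *\<^sub>R E0 x) x + (t - \<omega>) * inner (E0 x) x"
    by (simp add: inner_diff_left algebra_simps)
  with dissipative[OF assms] show ?thesis by simp
qed

definition resolvent_bound :: "real \<Rightarrow> bool" where
  "resolvent_bound M \<longleftrightarrow> 0 \<le> M \<and> (\<forall>t x u. \<omega> < t \<longrightarrow> x \<in> V \<longrightarrow> A0 x - t *\<^sub>R E0 x = E0 u \<longrightarrow>
      (t - \<omega>) * norm (E0 x) \<le> M * norm (E0 u))"

lemma resolvent_boundD:
  assumes "resolvent_bound M" "\<omega> < t" "x \<in> V" "A0 x - t *\<^sub>R E0 x = E0 u"
  shows "(t - \<omega>) * norm (E0 x) \<le> M * norm (E0 u)"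
  using assms unfolding resolvent_bound_def by blast

lemma resolvent_bound_exists: "\<exists>M. resolvent_bound M"
proof -
  obtain K where K: "K \<ge> 0" "\<And>x. (norm (E0 x))\<^sup>2 \<le> K * inner (E0 x) x"
    using selfadjoint_nonneg_norm_sq_le[OF E0_bounded_linear E0_selfadjoint E0_nonneg] by blast
  obtain C where C: "C \<ge> 0" "\<And>u x. inner (E0 u) x \<le> C * norm (E0 u) * norm (E0 x)"
    using selfadjoint_closed_range_inner_le[OF E0_bounded_linear E0_selfadjoint E0_closed_range]
    by blast
  have "(t - \<omega>) * norm (E0 x) \<le> K * C * norm (E0 u)"
    if t: "\<omega> < t" and x: "x \<in> V" and eq: "A0 x - t *\<^sub>R E0 x = E0 u" for t x u
  proof -
    have "(t - \<omega>) * inner (E0 x) x \<le> inner (E0 (- u)) x"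
      using shifted_dissipative[OF x, of t] eq by (simp add: E0.neg)
    also have "\<dots> \<le> C * norm (E0 u) * norm (E0 x)"
      using C(2)[of "- u" x] by (simp add: E0.neg)
    finally have form_le: "(t - \<omega>) * inner (E0 x) x \<le> C * norm (E0 u) * norm (E0 x)" .
    have "((t - \<omega>) * norm (E0 x)) * norm (E0 x) = (t - \<omega>) * (norm (E0 x))\<^sup>2"
      by (simp add: power2_eq_square)
    also have "\<dots> \<le> (t - \<omega>) * (K * inner (E0 x) x)"
      using K(2)[of x] t by (intro mult_left_mono) auto
    also have "\<dots> = K * ((t - \<omega>) * inner (E0 x) x)" by simp
    also have "\<dots> \<le> K * (C * norm (E0 u) * norm (E0 x))"
      using form_le K(1) by (rule mult_left_mono)
    finally have *: "((t - \<omega>) * norm (E0 x)) * norm (E0 x) \<le> (K * C * norm (E0 u)) * norm (E0 x)"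
      by (simp add: mult_ac)
    show ?thesis
    proof (cases "E0 x = 0")
      case False
      then show ?thesis using mult_right_le_imp_le[OF *] by simp
    qed (use K(1) C(1) in simp)
  qed
  with K(1) C(1) have "resolvent_bound (K * C)" unfolding resolvent_bound_def by simp
  then show ?thesis ..
qed

lemma pencil_kernel_trivial:
  assumes "\<omega> < t" "x \<in> V" "t *\<^sub>R E0 x = A0 x"
  shows "x = 0"
proof -
  obtain M where "resolvent_bound M" using resolvent_bound_exists by blast
  moreover have "A0 x - t *\<^sub>R E0 x = E0 0" using assms(3) by (simp add: E0.zero)
  ultimately have "(t - \<omega>) * norm (E0 x) \<le> M * norm (E0 0)"
    by (rule resolvent_boundD[OF _ assms(1,2)])
  with assms(1) have "E0 x = 0" by (simp add: E0.zero mult_le_0_iff)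
  moreover from this assms(3) have "A0 x = 0" by simp
  ultimately show ?thesis by (rule common_kernel_trivial[OF assms(2)])
qed

definition solvable :: "real \<Rightarrow> bool" where
  "solvable t \<longleftrightarrow> (\<forall>y. \<exists>x\<in>V. t *\<^sub>R E0 x - A0 x = y)"

lemma resolvent_bound_diff:
  assumes "resolvent_bound M" "\<omega> < a" "x1 \<in> V" "x2 \<in> V"
    and "(a *\<^sub>R E0 x1 - A0 x1) - (a *\<^sub>R E0 x2 - A0 x2) = E0 u"
  shows "(a - \<omega>) * dist (E0 x1) (E0 x2) \<le> M * norm (E0 u)"
proof -
  have "x2 - x1 \<in> V" using assms(3,4) V_subspace by (simp add: subspace_diff)
  moreover have "A0 (x2 - x1) - a *\<^sub>R E0 (x2 - x1) = E0 u"
    using assms(5) by (simp add: A0_diff[OF assms(4,3)] E0.diff algebra_simps)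
  ultimately have "(a - \<omega>) * norm (E0 (x2 - x1)) \<le> M * norm (E0 u)"
    by (rule resolvent_boundD[OF assms(1,2)])
  then show ?thesis by (simp add: E0.diff dist_norm norm_minus_commute)
qed

lemma solvable_perturb:
  assumes M: "resolvent_bound M" and "\<omega> < a" "solvable a"
    and close: "\<bar>a - t\<bar> * M \<le> (a - \<omega>) / 2"
  shows "solvable t"
  unfolding solvable_def
proof
  fix y
  obtain T where T: "\<And>z. T z \<in> V \<and> a *\<^sub>R E0 (T z) - A0 (T z) = z"
    using \<open>solvable a\<close> unfolding solvable_def by metis
  define \<mu> where "\<mu> = a - t"
  \<comment> \<open>\<open>t E0 x - A0 x = y\<close> iff \<open>x = T (y + \<mu> E0 x)\<close>, so we look for a fixed point
     \<open>E0 x\<close> in \<open>range E0\<close>\<close>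
  define f where "f w = E0 (T (y + \<mu> *\<^sub>R w))" for w
  have contraction: "dist (f w1) (f w2) \<le> 1/2 * dist w1 w2"
    if w1: "w1 \<in> range E0" and w2: "w2 \<in> range E0" for w1 w2
  proof -
    obtain p q where pq: "w1 = E0 p" "w2 = E0 q" using w1 w2 by blast
    have "(a - \<omega>) * dist (f w1) (f w2) \<le> M * norm (E0 (\<mu> *\<^sub>R (p - q)))"
      unfolding f_def using T[of "y + \<mu> *\<^sub>R w1"] T[of "y + \<mu> *\<^sub>R w2"]
      by (intro resolvent_bound_diff[OF M \<open>\<omega> < a\<close>]) (simp_all add: pq E0.scale E0.diff algebra_simps)
    also have "\<dots> = \<bar>\<mu>\<bar> * M * dist w1 w2"
      by (simp add: pq E0.scale E0.diff dist_norm)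
    also have "\<dots> \<le> (a - \<omega>) / 2 * dist w1 w2"
      using close by (intro mult_right_mono) (simp_all add: \<mu>_def)
    finally have "(a - \<omega>) * dist (f w1) (f w2) \<le> (a - \<omega>) * (1/2 * dist w1 w2)" by simp
    then show ?thesis using \<open>\<omega> < a\<close> by (simp add: mult_left_le_imp_le)
  qed
  have "\<exists>!w\<in>range E0. f w = w"
  proof (rule Banach_fix[where c="1/2"])
    show "complete (range E0)" using E0_closed_range complete_eq_closed by blast
    show "f ` range E0 \<subseteq> range E0" by (auto simp: f_def)
  qed (use contraction in auto)
  then obtain w where w: "w \<in> range E0" "f w = w" by blast
  define x where "x = T (y + \<mu> *\<^sub>R w)"
  have "E0 x = w" using w(2) by (simp add: f_def x_def)
  moreover have "a *\<^sub>R E0 x - A0 x = y + \<mu> *\<^sub>R w" using T by (simp add: x_def)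
  ultimately have "t *\<^sub>R E0 x - A0 x = y" by (simp add: \<mu>_def algebra_simps)
  moreover have "x \<in> V" using T by (simp add: x_def)
  ultimately show "\<exists>x\<in>V. t *\<^sub>R E0 x - A0 x = y" by blast
qed

lemma solvable_above:
  assumes "\<omega> < lam0" "solvable lam0" "\<omega> < t"
  shows "solvable t"
proof -
  obtain M where M: "resolvent_bound M" using resolvent_bound_exists by blast
  then have "M \<ge> 0" by (simp add: resolvent_bound_def)
  define \<delta> where "\<delta> = 1 / (2 * M + 2)"
  have \<delta>: "0 < \<delta>" "\<delta> < 1" "\<delta> * M \<le> 1/2" using \<open>M \<ge> 0\<close> by (simp_all add: \<delta>_def field_simps)
  have "solvable (\<omega> + (t - \<omega>))"
  proof (rule pos_real_relative_step_induct[where P="\<lambda>r. solvable (\<omega> + r)" and c="lam0 - \<omega>"])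
    fix a s assume a: "0 < a" "solvable (\<omega> + a)" and s: "\<bar>s - a\<bar> \<le> \<delta> * a"
    have "\<bar>\<omega> + a - (\<omega> + s)\<bar> * M \<le> \<delta> * a * M"
      using s \<open>M \<ge> 0\<close> by (intro mult_right_mono) (simp_all add: abs_minus_commute)
    also have "\<dots> \<le> a / 2" using \<delta>(3) a(1) mult_left_mono[OF \<delta>(3), of a] by (simp add: mult_ac)
    finally show "solvable (\<omega> + s)"
      using solvable_perturb[OF M, of "\<omega> + a" "\<omega> + s"] a by simp
  qed (use assms \<delta> in auto)
  then show ?thesis by simp
qed

end

section \<open>The pencil with boundary operator\<close>

instance chilbert \<subseteq> banach ..

lemma Re_cinner: "Re (cinner x y) = inner x y"
  by (simp add: cinner_def)

lemma bounded_clinear_imp_bounded_linear: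
  assumes "bounded_clinear f"
  shows "bounded_linear f"
proof -
  from assms obtain K where lin: "clinear_on UNIV f" and K: "\<forall>x. norm (f x) \<le> norm x * K"
    by (auto simp: bounded_clinear_def)
  show ?thesis
  proof (rule bounded_linear_intro[of _ K])
    show "f (x + y) = f x + f y" for x y using lin by (simp add: clinear_on_def)
    show "f (r *\<^sub>R x) = r *\<^sub>R f x" for r x
      using lin unfolding clinear_on_def by (metis UNIV_I scaleC_of_real)
  qed (use K in auto)
qed

lemma scaleC_minus_one: "scaleC (complex_of_real (-1)) x = - x"
  using scaleC_of_real[of "-1" x] by simp

lemma csubspace_zero: "csubspace D \<Longrightarrow> 0 \<in> D"
  and csubspace_add: "csubspace D \<Longrightarrow> x \<in> D \<Longrightarrow> y \<in> D \<Longrightarrow> x + y \<in> D"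
  and csubspace_scaleC: "csubspace D \<Longrightarrow> x \<in> D \<Longrightarrow> scaleC a x \<in> D"
  by (simp_all add: csubspace_def)

lemma csubspace_diff:
  assumes "csubspace D" "x \<in> D" "y \<in> D"
  shows "x - y \<in> D"
  using csubspace_add[OF assms(1,2) csubspace_scaleC[OF assms(1,3), of "complex_of_real (-1)"]]
  by (simp only: scaleC_minus_one diff_conv_add_uminus)

lemma clinear_on_add: "clinear_on D f \<Longrightarrow> x \<in> D \<Longrightarrow> y \<in> D \<Longrightarrow> f (x + y) = f x + f y"
  and clinear_on_scaleC: "clinear_on D f \<Longrightarrow> x \<in> D \<Longrightarrow> f (scaleC a x) = scaleC a (f x)"
  by (simp_all add: clinear_on_def)

lemma clinear_on_diff:
  assumes "csubspace D" "clinear_on D f" "x \<in> D" "y \<in> D"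
  shows "f (x - y) = f x - f y"
proof -
  have "- y \<in> D"
    using csubspace_scaleC[OF assms(1,4), of "complex_of_real (-1)"] by (simp only: scaleC_minus_one)
  moreover have "f (- y) = - f y"
    using clinear_on_scaleC[OF assms(2,4), of "complex_of_real (-1)"] by (simp only: scaleC_minus_one)
  ultimately show ?thesis using clinear_on_add[OF assms(2,3), of "- y"] by simp
qed

lemma clinear_on_kernel_subspace:
  assumes "csubspace D" "clinear_on D f"
  shows "subspace {x \<in> D. f x = 0}"
proof (rule subspaceI)
  have "0 \<in> D" by (rule csubspace_zero) fact
  moreover from this have "f 0 = 0" using clinear_on_diff[OF assms, of 0 0] by simp
  ultimately show "0 \<in> {x \<in> D. f x = 0}" by simp
  show "x + y \<in> {x \<in> D. f x = 0}" if "x \<in> {x \<in> D. f x = 0}" "y \<in> {x \<in> D. f x = 0}" for x y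
    using that csubspace_add[OF assms(1)] clinear_on_add[OF assms(2)] by simp
  show "c *\<^sub>R x \<in> {x \<in> D. f x = 0}" if "x \<in> {x \<in> D. f x = 0}" for c x
  proof -
    from that have x: "x \<in> D" "f x = 0" by simp_all
    have "c *\<^sub>R x \<in> D" "f (c *\<^sub>R x) = c *\<^sub>R f x"
      using csubspace_scaleC[OF assms(1) x(1), of "complex_of_real c"]
        clinear_on_scaleC[OF assms(2) x(1), of "complex_of_real c"]
      by (simp_all only: scaleC_of_real)
    with x(2) show ?thesis by simp
  qed
qed

lemma dissipative_pencil_kernel:
  fixes E0 A0 :: "'x::chilbert \<Rightarrow> 'x" and \<Gamma> :: "'x \<Rightarrow> 'y::chilbert"
  assumes "bounded_clinear E0"
    and selfadjoint: "\<forall>x y. cinner (E0 x) y = cinner x (E0 y)"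
    and nonneg: "\<forall>x. 0 \<le> Re (cinner (E0 x) x)"
    and "closed (range E0)" "csubspace D" "clinear_on D A0" "clinear_on D \<Gamma>"
    and dissipative: "\<forall>x\<in>D. \<Gamma> x = 0 \<longrightarrow> Re (cinner (A0 x - scaleC (complex_of_real \<omega>) (E0 x)) x) \<le> 0"
    and kernels: "\<forall>x\<in>D. E0 x = 0 \<and> A0 x = 0 \<and> \<Gamma> x = 0 \<longrightarrow> x = 0"
  shows "dissipative_pencil E0 A0 {x \<in> D. \<Gamma> x = 0} \<omega>"
proof (rule dissipative_pencil.intro)
  show "bounded_linear E0" by (rule bounded_clinear_imp_bounded_linear) fact
  show "inner (E0 x) y = inner x (E0 y)" for x y using selfadjoint by (metis Re_cinner)
  show "0 \<le> inner (E0 x) x" for x using nonneg by (metis Re_cinner)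
  show "subspace {x \<in> D. \<Gamma> x = 0}" by (rule clinear_on_kernel_subspace) fact+
  show "A0 (x - y) = A0 x - A0 y" if "x \<in> {x \<in> D. \<Gamma> x = 0}" "y \<in> {x \<in> D. \<Gamma> x = 0}" for x y
    using that clinear_on_diff[OF assms(5,6)] by blast
  show "inner (A0 x - \<omega> *\<^sub>R E0 x) x \<le> 0" if "x \<in> {x \<in> D. \<Gamma> x = 0}" for x
    using that dissipative by (simp add: Re_cinner scaleC_of_real)
  show "x = 0" if "x \<in> {x \<in> D. \<Gamma> x = 0}" "E0 x = 0" "A0 x = 0" for x
    using that kernels by blast
qed fact

lemma pencil_inv_solves:
  assumes "l \<in> pencil_rho E A D"
  shows "pencil_inv E A D l z \<in> D \<and> A (pencil_inv E A D l z) - scaleC l (E (pencil_inv E A D l z)) = z"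
proof -
  have bij: "bij_betw (\<lambda>x. scaleC l (E x) - A x) D UNIV" using assms by (simp add: pencil_rho_def)
  then have "- z \<in> (\<lambda>x. scaleC l (E x) - A x) ` D" by (simp add: bij_betw_def)
  then obtain x where "- z = scaleC l (E x) - A x" and "x \<in> D" by (rule imageE)
  then have x: "x \<in> D" "scaleC l (E x) - A x = - z" by simp_all
  have "\<exists>!x. x \<in> D \<and> A x - scaleC l (E x) = z"
  proof
    show "x \<in> D \<and> A x - scaleC l (E x) = z" using x by (metis minus_diff_eq minus_minus)
    fix x' assume x': "x' \<in> D \<and> A x' - scaleC l (E x') = z"
    then have "scaleC l (E x') - A x' = scaleC l (E x) - A x" using x by (metis minus_diff_eq)
    moreover have "inj_on (\<lambda>x. scaleC l (E x) - A x) D" using bij by (simp add: bij_betw_def)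
    ultimately show "x' = x" using x x' by (meson inj_onD)
  qed
  then show ?thesis unfolding pencil_inv_def by (rule theI')
qed

lemma boundary_pencil_in_rho:
  fixes E0 A0 :: "'x::chilbert \<Rightarrow> 'x" and \<Gamma> :: "'x \<Rightarrow> 'y::chilbert"
  assumes "csubspace D" "clinear_on D A0" "clinear_on D \<Gamma>" "\<Gamma> ` D = UNIV" "linear E0"
    and solvable: "\<forall>y. \<exists>x\<in>{x \<in> D. \<Gamma> x = 0}. t *\<^sub>R E0 x - A0 x = y"
    and kernel: "\<And>x. x \<in> D \<Longrightarrow> \<Gamma> x = 0 \<Longrightarrow> t *\<^sub>R E0 x = A0 x \<Longrightarrow> x = 0"
  shows "complex_of_real t \<in> pencil_rho (\<lambda>x. (E0 x, 0)) (\<lambda>x. (A0 x, \<Gamma> x)) D"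
proof -
  interpret E0: linear E0 by fact
  let ?P = "\<lambda>x. (t *\<^sub>R E0 x - A0 x, - \<Gamma> x)"
  have pencil: "scaleC (complex_of_real t) (E0 x, 0::'y) - (A0 x, \<Gamma> x) = ?P x" for x
    by (simp add: scaleC_prod_def scaleC_of_real)
  have "inj_on ?P D"
  proof (rule inj_onI)
    fix x y assume x: "x \<in> D" and y: "y \<in> D" and eq: "?P x = ?P y"
    have "x - y \<in> D" by (rule csubspace_diff[OF assms(1) x y])
    moreover have "\<Gamma> (x - y) = 0" using eq clinear_on_diff[OF assms(1,3) x y] by simp
    moreover have "t *\<^sub>R E0 (x - y) = A0 (x - y)"
      using eq by (simp add: clinear_on_diff[OF assms(1,2) x y] E0.diff algebra_simps)
    ultimately have "x - y = 0" by (rule kernel)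
    then show "x = y" by simp
  qed
  moreover have "?P ` D = UNIV"
  proof -
    have "(f, g) \<in> ?P ` D" for f g
    proof -
      obtain x1 where x1: "x1 \<in> D" "\<Gamma> x1 = - g" using \<open>\<Gamma> ` D = UNIV\<close> by (metis UNIV_I imageE)
      obtain x2 where x2: "x2 \<in> D" "\<Gamma> x2 = 0" "t *\<^sub>R E0 x2 - A0 x2 = f - (t *\<^sub>R E0 x1 - A0 x1)"
        using solvable by blast
      have "t *\<^sub>R E0 (x1 + x2) - A0 (x1 + x2) = (t *\<^sub>R E0 x1 - A0 x1) + (t *\<^sub>R E0 x2 - A0 x2)"
        by (simp add: clinear_on_add[OF assms(2) x1(1) x2(1)] E0.add scaleR_add_right)
      also have "\<dots> = f" by (simp add: x2(3))
      finally have first: "t *\<^sub>R E0 (x1 + x2) - A0 (x1 + x2) = f" .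
      have second: "- \<Gamma> (x1 + x2) = g"
        using x1(2) x2(2) by (simp add: clinear_on_add[OF assms(3) x1(1) x2(1)])
      have "x1 + x2 \<in> D" by (rule csubspace_add[OF assms(1) x1(1) x2(1)])
      then have "?P (x1 + x2) \<in> ?P ` D" by (rule imageI)
      with first second show ?thesis by simp
    qed
    then show ?thesis by auto
  qed
  ultimately show ?thesis by (simp add: pencil_rho_def bij_betw_def pencil)
qed

lemma boundary_pencil_inv:
  fixes E0 A0 :: "'x::chilbert \<Rightarrow> 'x" and \<Gamma> :: "'x \<Rightarrow> 'y::chilbert"
  assumes "complex_of_real t \<in> pencil_rho (\<lambda>x. (E0 x, 0)) (\<lambda>x. (A0 x, \<Gamma> x)) D"
    and "x = pencil_inv (\<lambda>x. (E0 x, 0)) (\<lambda>x. (A0 x, \<Gamma> x)) D (complex_of_real t) z"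
  shows "x \<in> D \<and> \<Gamma> x = snd z \<and> A0 x - t *\<^sub>R E0 x = fst z"
proof -
  have "scaleC (complex_of_real t) (0::'y) = 0" by (simp add: scaleC_of_real)
  with pencil_inv_solves[OF assms(1), of z] show ?thesis
    by (auto simp: assms(2) scaleC_prod_def scaleC_of_real prod_eq_iff)
qed

lemma cond_D_from_bound:
  fixes R :: "complex \<Rightarrow> 'v::real_normed_vector \<Rightarrow> 'v"
  assumes rho: "\<And>t. \<omega> < t \<Longrightarrow> complex_of_real t \<in> \<Omega>" and "0 \<le> M"
    and bound: "\<And>t v. \<omega> < t \<Longrightarrow> v \<in> range (R (complex_of_real (\<omega> + 1)) ^^ (k - 1)) \<Longrightarrow>
      (t - \<omega>) * norm (R (complex_of_real t) v) \<le> M * norm v"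
  shows "cond_D k \<Omega> R"
  unfolding cond_D_def
proof (rule exI[of _ "\<omega> + 1"], rule exI[of _ "M + 1"], intro conjI allI impI ballI)
  show "0 < M + 1" using \<open>0 \<le> M\<close> by simp
  show "complex_of_real t \<in> \<Omega>" if "\<omega> + 1 \<le> t" for t using rho that by simp
  fix t v assume t: "\<omega> + 1 < t" and v: "v \<in> range (R (complex_of_real (\<omega> + 1)) ^^ (k - 1))"
  have "(t - (\<omega> + 1)) * norm (R (complex_of_real t) v) \<le> (t - \<omega>) * norm (R (complex_of_real t) v)"
    by (intro mult_right_mono) auto
  also have "\<dots> \<le> M * norm v" using bound t v by simp
  also have "\<dots> \<le> (M + 1) * norm v" by (simp add: mult_right_mono)
  finally show "norm (R (complex_of_real t) v) \<le> (M + 1) / (t - (\<omega> + 1)) * norm v"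
    using t by (simp add: field_simps)
qed

lemma boundary_pencil_left_resolvent_D2:
  fixes E0 A0 :: "'x::chilbert \<Rightarrow> 'x" and \<Gamma> :: "'x \<Rightarrow> 'y::chilbert"
  assumes "dissipative_pencil E0 A0 {x \<in> D. \<Gamma> x = 0} \<omega>"
    and rho: "\<And>t. \<omega> < t \<Longrightarrow> complex_of_real t \<in> pencil_rho (\<lambda>x. (E0 x, 0)) (\<lambda>x. (A0 x, \<Gamma> x)) D"
  shows "cond_D 2 (pencil_rho (\<lambda>x. (E0 x, 0)) (\<lambda>x. (A0 x, \<Gamma> x)) D)
    (left_resolvent (\<lambda>x. (E0 x, 0)) (\<lambda>x. (A0 x, \<Gamma> x)) D)"
proof -
  interpret dissipative_pencil E0 A0 "{x \<in> D. \<Gamma> x = 0}" \<omega> by fact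
  obtain M where M: "resolvent_bound M" using resolvent_bound_exists by blast
  let ?R = "left_resolvent (\<lambda>x. (E0 x, 0)) (\<lambda>x. (A0 x, \<Gamma> x)) D"
  show ?thesis
  proof (rule cond_D_from_bound[OF rho])
    show "0 \<le> M" using M by (simp add: resolvent_bound_def)
    fix t v assume t: "\<omega> < t" and "v \<in> range (?R (complex_of_real (\<omega> + 1)) ^^ (2 - 1))"
    then obtain u where v: "v = (E0 u, 0)" by (auto simp: left_resolvent_def)
    define x where "x = pencil_inv (\<lambda>x. (E0 x, 0)) (\<lambda>x. (A0 x, \<Gamma> x)) D (complex_of_real t) v"
    have x: "x \<in> {x \<in> D. \<Gamma> x = 0}" "A0 x - t *\<^sub>R E0 x = E0 u"
      using boundary_pencil_inv[OF rho[OF t] x_def] by (simp_all add: v)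
    have "?R (complex_of_real t) v = (E0 x, 0)" by (simp add: left_resolvent_def x_def)
    then show "(t - \<omega>) * norm (?R (complex_of_real t) v) \<le> M * norm v"
      using resolvent_boundD[OF M t x] by (simp add: v)
  qed
qed

lemma boundary_pencil_right_resolvent_D1:
  fixes E0 A0 :: "'x::chilbert \<Rightarrow> 'x" and \<Gamma> :: "'x \<Rightarrow> 'y::chilbert"
  assumes "dissipative_pencil E0 A0 {x \<in> D. \<Gamma> x = 0} \<omega>"
    and rho: "\<And>t. \<omega> < t \<Longrightarrow> complex_of_real t \<in> pencil_rho (\<lambda>x. (E0 x, 0)) (\<lambda>x. (A0 x, \<Gamma> x)) D"
    and E0_inj: "\<And>x. E0 x = 0 \<Longrightarrow> x = 0"
  shows "cond_D 1 (pencil_rho (\<lambda>x. (E0 x, 0)) (\<lambda>x. (A0 x, \<Gamma> x)) D)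
    (right_resolvent (\<lambda>x. (E0 x, 0)) (\<lambda>x. (A0 x, \<Gamma> x)) D)"
proof -
  interpret dissipative_pencil E0 A0 "{x \<in> D. \<Gamma> x = 0}" \<omega> by fact
  obtain M where M: "resolvent_bound M" using resolvent_bound_exists by blast
  obtain C where C: "C \<ge> 0" "\<And>x. norm x \<le> C * norm (E0 x)"
    using injective_closed_range_bounded_below[OF E0_bounded_linear E0_closed_range E0_inj] by blast
  obtain K where K: "K \<ge> 0" "\<And>x. norm (E0 x) \<le> norm x * K"
    using E0.nonneg_bounded by blast
  let ?R = "right_resolvent (\<lambda>x. (E0 x, 0)) (\<lambda>x. (A0 x, \<Gamma> x)) D"
  show ?thesis
  proof (rule cond_D_from_bound[OF rho])
    show "0 \<le> C * M * K" using C(1) M K(1) by (simp add: resolvent_bound_def)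
    fix t v assume t: "\<omega> < t"
    define x where "x = pencil_inv (\<lambda>x. (E0 x, 0)) (\<lambda>x. (A0 x, \<Gamma> x)) D (complex_of_real t) (E0 v, 0)"
    have x: "x \<in> {x \<in> D. \<Gamma> x = 0}" "A0 x - t *\<^sub>R E0 x = E0 v"
      using boundary_pencil_inv[OF rho[OF t] x_def] by simp_all
    have "(t - \<omega>) * norm x \<le> C * ((t - \<omega>) * norm (E0 x))"
      using mult_left_mono[OF C(2)[of x], of "t - \<omega>"] t by (simp add: mult_ac)
    also have "\<dots> \<le> C * (M * norm (E0 v))"
      using resolvent_boundD[OF M t x] C(1) by (rule mult_left_mono)
    also have "\<dots> \<le> C * M * K * norm v"
      using K(2)[of v] C(1) M mult_left_mono[of "norm (E0 v)" "norm v * K" "C * M"]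
      by (simp add: resolvent_bound_def mult_ac)
    finally show "(t - \<omega>) * norm (?R (complex_of_real t) v) \<le> C * M * K * norm v"
      by (simp add: right_resolvent_def x_def)
  qed
qed

theorem mainTheorem9:
  fixes E0 :: "'x::chilbert \<Rightarrow> 'x" and A0 :: "'x \<Rightarrow> 'x" and D :: "'x set"
    and \<Gamma> :: "'x \<Rightarrow> 'y::chilbert" and \<omega> lam0 :: real
  assumes E0_bounded: "bounded_clinear E0"
    and E0_selfadj: "\<forall>x y. cinner (E0 x) y = cinner x (E0 y)"
    and E0_nonneg: "\<forall>x. 0 \<le> Re (cinner (E0 x) x)"
    and E0_closed_range: "closed (range E0)"
    and D_subspace: "csubspace D"
    and A0_linear: "clinear_on D A0"
    and \<Gamma>_linear: "clinear_on D \<Gamma>"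
    and \<Gamma>_bounded: "\<exists>C. \<forall>x\<in>D. norm (\<Gamma> x) \<le> C * graph_norm A0 x"
    and \<Gamma>_surj: "\<Gamma> ` D = UNIV"
    and dissip: "\<forall>x\<in>D. \<Gamma> x = 0 \<longrightarrow> Re (cinner (A0 x - scaleC (complex_of_real \<omega>) (E0 x)) x) \<le> 0"
    and lam0_gt: "lam0 > \<omega>"
    and lam0_surj: "\<forall>y. \<exists>x\<in>D. \<Gamma> x = 0 \<and> scaleC (complex_of_real lam0) (E0 x) - A0 x = y"
    and kernels: "\<forall>x\<in>D. E0 x = 0 \<and> A0 x = 0 \<and> \<Gamma> x = 0 \<longrightarrow> x = 0"
  shows "complex_of_real ` {\<omega><..} \<subseteq> pencil_rho (\<lambda>x. (E0 x, 0)) (\<lambda>x. (A0 x, \<Gamma> x)) D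
    \<and> cond_D 2 (pencil_rho (\<lambda>x. (E0 x, 0)) (\<lambda>x. (A0 x, \<Gamma> x)) D)
           (left_resolvent (\<lambda>x. (E0 x, 0)) (\<lambda>x. (A0 x, \<Gamma> x)) D)
    \<and> ((\<forall>x. E0 x = 0 \<longrightarrow> x = 0) \<longrightarrow>
         cond_D 1 (pencil_rho (\<lambda>x. (E0 x, 0)) (\<lambda>x. (A0 x, \<Gamma> x)) D)
           (right_resolvent (\<lambda>x. (E0 x, 0)) (\<lambda>x. (A0 x, \<Gamma> x)) D))"
proof -
  have pencil: "dissipative_pencil E0 A0 {x \<in> D. \<Gamma> x = 0} \<omega>"
    using dissipative_pencil_kernel[OF E0_bounded E0_selfadj E0_nonneg E0_closed_range
        D_subspace A0_linear \<Gamma>_linear dissip kernels] .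
  interpret dissipative_pencil E0 A0 "{x \<in> D. \<Gamma> x = 0}" \<omega> by (fact pencil)
  have "solvable lam0" using lam0_surj by (auto simp: solvable_def scaleC_of_real)
  then have rho: "complex_of_real t \<in> pencil_rho (\<lambda>x. (E0 x, 0)) (\<lambda>x. (A0 x, \<Gamma> x)) D"
    if "\<omega> < t" for t
    using boundary_pencil_in_rho[OF D_subspace A0_linear \<Gamma>_linear \<Gamma>_surj E0.linear_axioms]
      solvable_above[OF lam0_gt _ that] pencil_kernel_trivial[OF that]
    by (simp add: solvable_def)
  show ?thesis
    using rho boundary_pencil_left_resolvent_D2[OF pencil rho]
      boundary_pencil_right_resolvent_D1[OF pencil rho] by auto
qed

end
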